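(* Assume that $|l+L|\leq N$. Set $\vec{N} = (N+L,N-L)$. Parameterize a $2\times 2$ complex matrix as $Z=\begin{pmatrix}x_1 & y_1\\ x_2 & y_2\end{pmatrix}$. Then the polynomial $\varphi_\sigma$ defined by \[ \varphi_\sigma = \begin{cases} (x_{1}\bar{x}_{2})^{N-l-L}(\bar{x}_{2})^{2(l+L)}(x_{1}y_{2}-x_{2}y_{1})^{l+2L}, & \text{if } l+L\ge 0,\ l+2L\ge 0;\\ (x_{1}\bar{x}_{2})^{N-l-L}(\bar{x}_{2})^{2(l+L)}(\bar{x}_{1}\bar{y}_{2}-\bar{x}_{2}\bar{y}_{1})^{-(l+2L)}, & \text{if } l+L\ge 0,\ l+2L\le 0;\\ (x_{1}\bar{x}_{2})^{N+l+L}(x_{1})^{-2(l+L)}(x_{1}y_{2}-x_{2}y_{1})^{l+2L}, & \text{if } l+L\le 0,\ l+2L\ge 0;\\ (x_{1}\bar{x}_{2})^{N+l+L}(x_{1})^{-2(l+L)}(\bar{x}_{1}\bar{y}_{2}-\bar{x}_{2}\bar{y}_{1})^{-(l+2L)}, & \text{if } l+L\le 0,\ l+2L\le 0 \end{cases} \] is a bi-$(\vec{N},\chi_{-l}\otimes\chi_{l+2L})$-equivariant polynomial function in $\mathbb{C}[\mathrm{Mat}_{2}^{\mathbb{R}}]$. The restriction map $\iota_2: \mathbb{C}[\mathrm{Mat}_{2}^{\mathbb{R}}]\rightarrow C^\infty(\mathrm{U}_2)$ sends $\varphi_\sigma$ to a smooth function $\iota_2(\varphi_\sigma)$ living in the minimal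 $K$-type $\tau_\sigma$ of $\sigma$. More precisely, $\iota_2(\varphi_\sigma)\in \tau_{\sigma,-l-L}$.
   Context: For an integer $k$, $\chi_k$ denotes the unitary character $z\mapsto (z/|z|)^k$ of $\mathbb{C}^\times$ (also restricted to $\mathrm{U}_1$), and $|z|_{\mathbb{C}}=z\bar z$. Let $N\geq 0$, $m$, $L$ be integers and let $\sigma = \mathrm{Ind}_{B_{\mathrm{GL}_2}}^{\mathrm{GL}_2(\mathbb{C})} |\cdot|_{\mathbb{C}}^{m/2}\chi_{N+L}\otimes |\cdot|_{\mathbb{C}}^{m/2}\chi_{-N+L}$ (normalized induction from the upper triangular Borel). Let $\chi$ be a character of $\mathbb{C}^\times$ with $\chi(a)=|a|_{\mathbb{C}}^{u_0}\chi_l(a/|a|)$ for some $l\in\mathbb{Z}$, $u_0\in\mathbb{C}$. The minimal $\mathrm{U}_2$-type $\tau_\sigma$ of $\sigma$ has highest weight $(N+L,-N+L)$ and decomposes into one-dimensional weight spaces $\tau_{\sigma,k}=\{v\in\tau_\sigma : \sigma(\mathrm{diag}(e^{i\theta},e^{-i\theta}))v=e^{2ik\theta}v\}$, $-N\le k\le N$. $\mathbb{C}[\mathrm{Mat}_2^{\mathbb{R}}]$ is the space of complex polynomials in the real and imaginary parts of the entries of $Z$ (equivalently in the entries of $Z$ and $\bar Z$), on which $\mathrm{U}_2$ acts by right translation $f(Z,\bar Z)\mapsto f(Zk,\bar Z\bar k)$; $\iota_2$ is restriction of a polynomial to $\mathrm{U}_2$ (so $\iota_2(f)(k)=f(k,\bar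 k)$), which is $\mathrm{U}_2$-equivariant. "Bi-$(\vec N,\chi_{-l}\otimes\chi_{l+2L})$-equivariant" means: equivariant under left multiplication by the diagonal torus of $\mathrm{U}_2$ via the character $\chi_{N+L}\otimes\chi_{-N+L}$ (so that the restriction lies in $\mathrm{Ind}_{T\cap\mathrm{U}_2}^{\mathrm{U}_2}\chi_{N+L}\otimes\chi_{-N+L}$), and under right multiplication by $\mathrm{diag}(k_1,k_2)$, $k_1,k_2\in\mathrm{U}_1$, via $\chi_{-l}(k_1)\chi_{l+2L}(k_2)$. *)

theory Defs
  imports "HOL-Analysis.Analysis"
begin

definition diag2 :: "complex \<Rightarrow> complex \<Rightarrow> complex^2^2" where
  "diag2 a b = (\<chi> i j. if i = j then (if i = 1 then a else b) else 0)"

definition conj_transpose2 :: "complex^2^2 \<Rightarrow> complex^2^2" where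
  "conj_transpose2 A = (\<chi> i j. cnj (A $ j $ i))"

definition U2 :: "(complex^2^2) set" where
  "U2 = {k. k ** conj_transpose2 k = mat 1}"

definition chi :: "int \<Rightarrow> complex \<Rightarrow> complex" where
  "chi k z = (z / complex_of_real (cmod z)) powi k"

inductive_set mat2_poly_funs :: "(complex^2^2 \<Rightarrow> complex) set" where
  const: "(\<lambda>Z. c) \<in> mat2_poly_funs"
| entry: "(\<lambda>Z. Z $ i $ j) \<in> mat2_poly_funs"
| conj_entry: "(\<lambda>Z. cnj (Z $ i $ j)) \<in> mat2_poly_funs"
| add: "f \<in> mat2_poly_funs \<Longrightarrow> g \<in> mat2_poly_funs \<Longrightarrow> (\<lambda>Z. f Z + g Z) \<in> mat2_poly_funs"
| mult: "f \<in> mat2_poly_funs \<Longrightarrow> g \<in> mat2_poly_funs \<Longrightarrow> (\<lambda>Z. f Z * g Z) \<in> mat2_poly_funs"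

definition bi_equivariant :: "int \<Rightarrow> int \<Rightarrow> int \<Rightarrow> (complex^2^2 \<Rightarrow> complex) \<Rightarrow> bool" where
  "bi_equivariant N l L f \<longleftrightarrow>
     (\<forall>t1 t2 Z. cmod t1 = 1 \<longrightarrow> cmod t2 = 1 \<longrightarrow>
        f (diag2 t1 t2 ** Z) = chi (N + L) t1 * chi (- N + L) t2 * f Z) \<and>
     (\<forall>k1 k2 Z. cmod k1 = 1 \<longrightarrow> cmod k2 = 1 \<longrightarrow>
        f (Z ** diag2 k1 k2) = chi (- l) k1 * chi (l + 2 * L) k2 * f Z)"

text \<open>The polynomial phi_sigma (cases as in the paper, boundary cases taken in the listed order;
  the formulas agree on overlaps).\<close>
definition phi_sigma :: "int \<Rightarrow> int \<Rightarrow> int \<Rightarrow> complex^2^2 \<Rightarrow> complex" where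
  "phi_sigma N l L Z =
    (let x1 = Z$1$1; y1 = Z$1$2; x2 = Z$2$1; y2 = Z$2$2;
         d = x1 * y2 - x2 * y1; dbar = cnj x1 * cnj y2 - cnj x2 * cnj y1 in
     if l + L \<ge> 0 \<and> l + 2*L \<ge> 0 then
       (x1 * cnj x2) powi (N - l - L) * (cnj x2) powi (2*(l+L)) * d powi (l + 2*L)
     else if l + L \<ge> 0 \<and> l + 2*L \<le> 0 then
       (x1 * cnj x2) powi (N - l - L) * (cnj x2) powi (2*(l+L)) * dbar powi (-(l + 2*L))
     else if l + L \<le> 0 \<and> l + 2*L \<ge> 0 then
       (x1 * cnj x2) powi (N + l + L) * x1 powi (-2*(l+L)) * d powi (l + 2*L)
     else
       (x1 * cnj x2) powi (N + l + L) * x1 powi (-2*(l+L)) * dbar powi (-(l + 2*L)))"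

definition iota2 :: "(complex^2^2 \<Rightarrow> complex) \<Rightarrow> (complex^2^2 \<Rightarrow> complex)" where
  "iota2 f = (\<lambda>k. if k \<in> U2 then f k else 0)"

text \<open>The minimal U_2-type tau_sigma (highest weight (N+L,-N+L)), realized inside
  Ind_{T cap U_2}^{U_2} chi_{N+L} (x) chi_{-N+L} as the span of the functions
  k |-> det(k)^{L-N} k11^{2N-j} k12^j, 0 <= j <= 2N (the model Sym^{2N} (x) det^{L-N}).\<close>
definition tau_sigma :: "int \<Rightarrow> int \<Rightarrow> (complex^2^2 \<Rightarrow> complex) set" where
  "tau_sigma N L = {f. (\<forall>k. k \<notin> U2 \<longrightarrow> f k = 0) \<and>
     (\<exists>c :: nat \<Rightarrow> complex. \<forall>k\<in>U2.
        f k = (\<Sum>j\<le>nat (2*N). c j * det k powi (L - N) * (k$1$1) ^ (nat (2*N) - j) * (k$1$2) ^ j))}"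

definition tau_sigma_wt :: "int \<Rightarrow> int \<Rightarrow> int \<Rightarrow> (complex^2^2 \<Rightarrow> complex) set" where
  "tau_sigma_wt N L m = {f \<in> tau_sigma N L. \<forall>g\<in>U2. \<forall>\<theta>::real.
      f (g ** diag2 (cis \<theta>) (cis (-\<theta>))) = cis (2 * of_int m * \<theta>) * f g}"

end

theory Submission
  imports Defs
begin

(* In all four cases phi_sigma is the single monomial x1^a cnj(x2)^b det^c cnj(det)^e with
   a = N-l-L, b = N+l+L and c - e = l+2L, all exponents being nonnegative when |l+L| <= N.
   Each factor transforms by a character under the left and right diagonal tori of U_2, which
   gives bi-equivariance and, via diag(e^{i theta}, e^{-i theta}), the weight -l-L.  On U_2 one
   has cnj(det k) = det(k)^-1 and cnj(x2) = -y1 cnj(det k), so the restriction equals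
   (-1)^b det^(L-N) x1^a y1^b, a basis vector of the model Sym^2N (x) det^(L-N) of tau_sigma. *)

lemma cnj_eq_inverse_if_norm_1: "cmod z = 1 \<Longrightarrow> cnj z = inverse z"
  using divide_conv_cnj[of z 1] by (simp add: inverse_eq_divide)

lemma chi_eq_power_int: "cmod z = 1 \<Longrightarrow> chi k z = z powi k"
  by (simp add: chi_def)

lemma diag2_mult_entries:
  "(diag2 t1 t2 ** Z)$1$1 = t1 * Z$1$1" "(diag2 t1 t2 ** Z)$2$1 = t2 * Z$2$1"
  "(Z ** diag2 t1 t2)$1$1 = t1 * Z$1$1" "(Z ** diag2 t1 t2)$2$1 = t1 * Z$2$1"
  by (simp_all add: matrix_matrix_mult_def diag2_def sum_2 mult.commute)

lemma det_diag2: "det (diag2 a b) = a * b"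
  by (simp add: det_2 diag2_def)

lemma conj_transpose2_mult: "conj_transpose2 (A ** B) = conj_transpose2 B ** conj_transpose2 A"
  by (simp add: vec_eq_iff conj_transpose2_def matrix_matrix_mult_def sum_2 mult.commute)

lemma U2_mult: "A \<in> U2 \<Longrightarrow> B \<in> U2 \<Longrightarrow> A ** B \<in> U2"
  by (simp add: U2_def conj_transpose2_mult matrix_mul_assoc flip: matrix_mul_assoc[of A])

lemma diag2_in_U2: "cmod a = 1 \<Longrightarrow> cmod b = 1 \<Longrightarrow> diag2 a b \<in> U2"
  by (auto simp: U2_def vec_eq_iff forall_2 diag2_def conj_transpose2_def matrix_matrix_mult_def
      sum_2 mat_def simp flip: complex_norm_square)

lemma U2_row_relations:
  assumes "k \<in> U2"
  shows "k$1$1 * cnj (k$1$1) + k$1$2 * cnj (k$1$2) = 1"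
    and "k$2$1 * cnj (k$2$1) + k$2$2 * cnj (k$2$2) = 1"
    and "k$1$1 * cnj (k$2$1) + k$1$2 * cnj (k$2$2) = 0"
  using assms
  by (auto simp: U2_def vec_eq_iff forall_2 matrix_matrix_mult_def sum_2 conj_transpose2_def mat_def)

text \<open>Both identities are entries of k^* = k^-1 = adj(k) / det k for unitary k.\<close>

lemma U2_det_mult_cnj:
  assumes "k \<in> U2"
  shows "det k * cnj (det k) = 1"
proof -
  note r = U2_row_relations[OF assms]
  have "det k * cnj (det k) =
      (k$1$1 * cnj (k$1$1) + k$1$2 * cnj (k$1$2)) * (k$2$1 * cnj (k$2$1) + k$2$2 * cnj (k$2$2))
    - (k$1$1 * cnj (k$2$1) + k$1$2 * cnj (k$2$2)) * cnj (k$1$1 * cnj (k$2$1) + k$1$2 * cnj (k$2$2))"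
    by (simp add: det_2 algebra_simps)
  then show ?thesis using r by simp
qed

lemma U2_cnj_entry_21:
  assumes "k \<in> U2"
  shows "cnj (k$2$1) = - k$1$2 * cnj (det k)"
proof -
  note r = U2_row_relations[OF assms]
  have "- k$1$2 * cnj (det k) =
      (k$1$1 * cnj (k$1$1) + k$1$2 * cnj (k$1$2)) * cnj (k$2$1)
    - cnj (k$1$1) * (k$1$1 * cnj (k$2$1) + k$1$2 * cnj (k$2$2))"
    by (simp add: det_2 algebra_simps)
  then show ?thesis using r by simp
qed

lemma mat2_poly_funs_power: "f \<in> mat2_poly_funs \<Longrightarrow> (\<lambda>Z. f Z ^ n) \<in> mat2_poly_funs"
proof (induction n)
  case 0
  then show ?case using mat2_poly_funs.const[of 1] by simp
next
  case (Suc n)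
  then show ?case using mat2_poly_funs.mult[OF Suc.prems Suc.IH] by simp
qed

lemma mat2_poly_funs_diff:
  "f \<in> mat2_poly_funs \<Longrightarrow> g \<in> mat2_poly_funs \<Longrightarrow> (\<lambda>Z. f Z - g Z) \<in> mat2_poly_funs"
  using mat2_poly_funs.add[OF _ mat2_poly_funs.mult[OF mat2_poly_funs.const[of "-1"]], of f g]
  by simp

lemma iota2_in_tau_sigma_wt:
  assumes "iota2 f \<in> tau_sigma N L"
    and right: "\<And>t1 t2 Z. cmod t1 = 1 \<Longrightarrow> cmod t2 = 1 \<Longrightarrow>
      f (Z ** diag2 t1 t2) = t1 powi p * t2 powi q * f Z"
    and "p - q = 2 * m"
  shows "iota2 f \<in> tau_sigma_wt N L m"
proof -
  have "cis \<theta> powi p * cis (-\<theta>) powi q = cis (2 * of_int m * \<theta>)" for \<theta>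
  proof -
    have "of_int p * \<theta> + of_int q * - \<theta> = of_int (p - q) * \<theta>" by (simp add: algebra_simps)
    then show ?thesis using \<open>p - q = 2 * m\<close> by (simp add: cis_power_int cis_mult)
  qed
  then have "f (g ** diag2 (cis \<theta>) (cis (-\<theta>))) = cis (2 * of_int m * \<theta>) * f g" for g \<theta>
    using right[of "cis \<theta>" "cis (-\<theta>)" g] by simp
  then show ?thesis
    using assms(1) by (simp add: tau_sigma_wt_def iota2_def U2_mult diag2_in_U2)
qed

definition torus_monomial :: "nat \<Rightarrow> nat \<Rightarrow> nat \<Rightarrow> nat \<Rightarrow> complex^2^2 \<Rightarrow> complex" where
  "torus_monomial a b c e Z = Z$1$1 ^ a * cnj (Z$2$1) ^ b * det Z ^ c * cnj (det Z) ^ e"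

lemma torus_monomial_in_mat2_poly_funs: "torus_monomial a b c e \<in> mat2_poly_funs"
proof -
  have "torus_monomial a b c e = (\<lambda>Z. Z$1$1 ^ a * cnj (Z$2$1) ^ b
      * (Z$1$1 * Z$2$2 - Z$1$2 * Z$2$1) ^ c
      * (cnj (Z$1$1) * cnj (Z$2$2) - cnj (Z$1$2) * cnj (Z$2$1)) ^ e)"
    by (simp add: fun_eq_iff torus_monomial_def det_2)
  then show ?thesis
    by (simp only:) (intro mat2_poly_funs.intros mat2_poly_funs_power mat2_poly_funs_diff)
qed

lemma torus_monomial_scale:
  assumes "Z'$1$1 = s * Z$1$1" "Z'$2$1 = r * Z$2$1" "det Z' = q * det Z"
    and "cmod r = 1" "cmod q = 1"
  shows "torus_monomial a b c e Z' =
    s ^ a * r powi (- int b) * q powi (int c - int e) * torus_monomial a b c e Z"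
proof -
  have "q \<noteq> 0" using \<open>cmod q = 1\<close> by auto
  then have "q powi (int c - int e) = q ^ c * inverse q ^ e"
    by (simp add: power_int_diff power_inverse divide_inverse)
  then show ?thesis
    using assms by (simp add: torus_monomial_def cnj_eq_inverse_if_norm_1 power_int_minus
        power_mult_distrib power_inverse mult_ac)
qed

lemma torus_monomial_left_torus:
  assumes "cmod t1 = 1" "cmod t2 = 1"
  shows "torus_monomial a b c e (diag2 t1 t2 ** Z) =
    t1 powi (int a + (int c - int e)) * t2 powi ((int c - int e) - int b) * torus_monomial a b c e Z"
proof -
  have "t1 \<noteq> 0" "t2 \<noteq> 0" using assms by auto
  moreover have "cmod (t1 * t2) = 1" using assms by (simp add: norm_mult)
  ultimately show ?thesis
    using torus_monomial_scale[of "diag2 t1 t2 ** Z" t1 Z t2 "t1 * t2"] assms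
    by (simp add: diag2_mult_entries det_mul det_diag2 power_int_mult_distrib power_int_add
        power_int_diff power_int_minus field_simps)
qed

lemma torus_monomial_right_torus:
  assumes "cmod t1 = 1" "cmod t2 = 1"
  shows "torus_monomial a b c e (Z ** diag2 t1 t2) =
    t1 powi ((int a - int b) + (int c - int e)) * t2 powi (int c - int e) * torus_monomial a b c e Z"
proof -
  have "t1 \<noteq> 0" "t2 \<noteq> 0" using assms by auto
  moreover have "cmod (t1 * t2) = 1" using assms by (simp add: norm_mult)
  ultimately show ?thesis
    using torus_monomial_scale[of "Z ** diag2 t1 t2" t1 Z t1 "t1 * t2"] assms
    by (simp add: diag2_mult_entries det_mul det_diag2 power_int_mult_distrib power_int_add
        power_int_diff power_int_minus field_simps)
qed

lemma torus_monomial_on_U2: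
  assumes "k \<in> U2"
  shows "torus_monomial a b c e k =
    (-1) ^ b * det k powi (int c - int e - int b) * k$1$1 ^ a * k$1$2 ^ b"
proof -
  have unit: "det k * cnj (det k) = 1" using U2_det_mult_cnj[OF assms] .
  then have "det k \<noteq> 0" by auto
  moreover have "cnj (det k) = inverse (det k)" using inverse_unique[OF unit] by simp
  ultimately show ?thesis
    by (simp add: torus_monomial_def U2_cnj_entry_21[OF assms] power_int_diff
        power_mult_distrib power_inverse power_minus' mult_ac divide_inverse)
qed

lemma phi_sigma_eq_torus_monomial:
  assumes "\<bar>l + L\<bar> \<le> N"
  shows "phi_sigma N l L =
    torus_monomial (nat (N - l - L)) (nat (N + l + L)) (nat (l + 2*L)) (nat (- (l + 2*L)))"
proof
  fix Z :: "complex^2^2"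
  have det: "det Z = Z$1$1 * Z$2$2 - Z$2$1 * Z$1$2" by (simp add: det_2 mult.commute)
  show "phi_sigma N l L Z =
    torus_monomial (nat (N - l - L)) (nat (N + l + L)) (nat (l + 2*L)) (nat (- (l + 2*L))) Z"
  proof (cases "l + L \<ge> 0")
    case True
    then have "nat (N + l + L) = nat (N - l - L) + nat (2*(l+L))"
      using assms by (simp flip: nat_add_distrib)
    then show ?thesis using True assms unfolding phi_sigma_def torus_monomial_def Let_def det
      by (auto simp: power_int_def power_add power_mult_distrib mult_ac)
  next
    case False
    then have "nat (N - l - L) = nat (N + l + L) + nat (-2*(l+L))"
      using assms by (simp flip: nat_add_distrib)
    then show ?thesis using False assms unfolding phi_sigma_def torus_monomial_def Let_def det
      by (auto simp: power_int_def power_add power_mult_distrib mult_ac)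
  qed
qed

lemma phi_sigma_torus_monomialE:
  assumes "\<bar>l + L\<bar> \<le> N"
  obtains a b c e where "phi_sigma N l L = torus_monomial a b c e"
    and "int a = N - l - L" "int b = N + l + L" "int c - int e = l + 2*L"
  using phi_sigma_eq_torus_monomial[OF assms] assms by (intro that) auto

lemma bi_equivariant_phi_sigma:
  assumes "\<bar>l + L\<bar> \<le> N"
  shows "bi_equivariant N l L (phi_sigma N l L)"
proof -
  obtain a b c e where phi: "phi_sigma N l L = torus_monomial a b c e"
    and a: "int a = N - l - L" and b: "int b = N + l + L" and ce: "int c - int e = l + 2*L"
    using phi_sigma_torus_monomialE[OF assms] .
  show ?thesis
    by (simp add: bi_equivariant_def phi chi_eq_power_int torus_monomial_left_torus
        torus_monomial_right_torus a b ce algebra_simps)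
qed

lemma iota2_phi_sigma_in_tau_sigma:
  assumes "\<bar>l + L\<bar> \<le> N"
  shows "iota2 (phi_sigma N l L) \<in> tau_sigma N L"
proof -
  obtain a b c e where phi: "phi_sigma N l L = torus_monomial a b c e"
    and a: "int a = N - l - L" and b: "int b = N + l + L" and ce: "int c - int e = l + 2*L"
    using phi_sigma_torus_monomialE[OF assms] .
  have b_le: "b \<le> nat (2*N)" and a_eq: "nat (2*N) - b = a" using a b by auto
  have det_exponent: "int c - int e - int b = L - N" using b ce by simp
  let ?coeff = "\<lambda>j. if j = b then (-1) ^ b else 0 :: complex"
  have "iota2 (phi_sigma N l L) k = (\<Sum>j\<le>nat (2*N).
      ?coeff j * det k powi (L - N) * (k$1$1) ^ (nat (2*N) - j) * (k$1$2) ^ j)" if "k \<in> U2" for k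
  proof -
    have "(\<Sum>j\<le>nat (2*N). ?coeff j * det k powi (L - N) * (k$1$1) ^ (nat (2*N) - j) * (k$1$2) ^ j)
        = (\<Sum>j\<le>nat (2*N). if j = b
            then (-1) ^ b * det k powi (L - N) * (k$1$1) ^ (nat (2*N) - j) * (k$1$2) ^ j else 0)"
      by (intro sum.cong) auto
    then show ?thesis
      using that b_le by (simp add: iota2_def phi torus_monomial_on_U2 det_exponent a_eq)
  qed
  then show ?thesis
    unfolding tau_sigma_def by (auto simp: iota2_def)
qed

theorem corollary4p2:
  fixes N l L :: int
  assumes "N \<ge> 0" and "\<bar>l + L\<bar> \<le> N"
  shows "phi_sigma N l L \<in> mat2_poly_funs \<and> bi_equivariant N l L (phi_sigma N l L)
         \<and> iota2 (phi_sigma N l L) \<in> tau_sigma_wt N L (- l - L)"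
proof (intro conjI)
  show "phi_sigma N l L \<in> mat2_poly_funs"
    using phi_sigma_eq_torus_monomial[OF assms(2)] torus_monomial_in_mat2_poly_funs by simp
  show equiv: "bi_equivariant N l L (phi_sigma N l L)"
    using bi_equivariant_phi_sigma[OF assms(2)] .
  have "phi_sigma N l L (Z ** diag2 t1 t2) = t1 powi (- l) * t2 powi (l + 2*L) * phi_sigma N l L Z"
    if "cmod t1 = 1" "cmod t2 = 1" for t1 t2 Z
    using equiv that by (simp add: bi_equivariant_def chi_eq_power_int)
  then show "iota2 (phi_sigma N l L) \<in> tau_sigma_wt N L (- l - L)"
    by (intro iota2_in_tau_sigma_wt[where p = "- l" and q = "l + 2*L"]
        iota2_phi_sigma_in_tau_sigma[OF assms(2)]) auto
qed

end
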